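(* Let $m\ge 1$ and let $\mathbf A,\mathbf B\in\mathbb R^{m\times m}$, where $\mathbf A$ is Schur stable (spectral radius $\rho(\mathbf A)<1$). Fix a symmetric positive definite matrix $\mathbf C\in\mathbb R^{m\times m}$ and let $\mathbf H=\mathbf H^T$ be the unique positive definite solution of the discrete Lyapunov equation $\mathbf A^T\mathbf H\mathbf A-\mathbf H=-\mathbf C$. Let $c>0$ be the smallest eigenvalue of $\mathbf C$, and let $0<\underline{\eta}\le\overline{\eta}$ be the smallest and largest eigenvalues of $\mathbf H$. Define $$\alpha:=\begin{cases}\dfrac{\big|\,\overline{\eta}-c+|\mathbf A^T\mathbf H\mathbf B|\,\big|}{\overline{\eta}}, & \text{if } c>|\mathbf A^T\mathbf H\mathbf B|,\\[2mm] \dfrac{\big|\,\underline{\eta}-c+|\mathbf A^T\mathbf H\mathbf B|\,\big|}{\underline{\eta}}, & \text{if } c\le|\mathbf A^T\mathbf H\mathbf B|,\end{cases}\qquad \beta:=\underline{\eta}^{-1}\big(|\mathbf A^T\mathbf H\mathbf B|+|\mathbf B^T\mathbf H\mathbf B|\big).$$ Let $\mathcal T\subset\{1,2,3,\dots\}$ be a nonempty set with $\overline{\tau}:=\max_{\tau\in\mathcal T}\tau<\infty$, and let $\tau:\mathbb Z_{\ge 0}\to\mathcal T$, $t\mapsto\tau_t$, be an arbitrary (deterministic) delay sequence. Consider any sequence $(\mathbf x_t)_{t\ge 0}\subset\mathbb R^m$ with arbitrary initial values $\mathbf x_0,\dots,\mathbf x_{\overline{\tau}}$ satisfying $$\mathbf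 x_{t+1}=\mathbf A\,\mathbf x_t+\mathbf B\,\mathbf x_{t-\tau_t}\qquad\text{for all } t\ge\overline{\tau}.$$ If $\alpha+\beta<1$, then $\mathbf x_t\to 0$ exponentially fast as $t\to\infty$, i.e. there exist constants $M>0$ and $\lambda\in(0,1)$ (independent of $t$) such that $\|\mathbf x_t\|\le M\lambda^{t}\max_{0\le s\le\overline{\tau}}\|\mathbf x_s\|$ for all $t\ge 0$.
   Context: Here $|\cdot|$ applied to a matrix denotes the induced (operator) Euclidean norm, and $|\cdot|$ applied to a real number denotes absolute value. In the paper this is applied to the closed-loop mean dynamics of a linear plant with Kalman filter, LQG feedback and an additional delayed state-feedback "watermarking" term, where $\mathbf A$ is the LQG closed-loop matrix and $\mathbf B$ the matrix multiplying the delayed state, but the statement is purely about the delayed linear recursion above. *)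

theory Defs
  imports "HOL-Analysis.Analysis"
begin

definition cmat :: "real^'n^'n \<Rightarrow> complex^'n^'n" where
  "cmat A = (\<chi> i j. complex_of_real (A $ i $ j))"

definition cspectrum :: "real^'n^'n \<Rightarrow> complex set" where
  "cspectrum A = {\<mu>. \<exists>v::complex^'n. v \<noteq> 0 \<and> cmat A *v v = \<mu> *s v}"

definition spectral_radius :: "real^'n^'n \<Rightarrow> real" where
  "spectral_radius A = Max (cmod ` cspectrum A)"

definition schur_stable :: "real^'n^'n \<Rightarrow> bool" where
  "schur_stable A \<longleftrightarrow> spectral_radius A < 1"

definition real_eigenvalues :: "real^'n^'n \<Rightarrow> real set" where
  "real_eigenvalues A = {\<mu>. \<exists>v::real^'n. v \<noteq> 0 \<and> A *v v = \<mu> *s v}"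

definition min_eig :: "real^'n^'n \<Rightarrow> real" where
  "min_eig A = Min (real_eigenvalues A)"

definition max_eig :: "real^'n^'n \<Rightarrow> real" where
  "max_eig A = Max (real_eigenvalues A)"

definition pos_def :: "real^'n^'n \<Rightarrow> bool" where
  "pos_def A \<longleftrightarrow> (\<forall>x. x \<noteq> 0 \<longrightarrow> x \<bullet> (A *v x) > 0)"

definition mnorm :: "real^'n^'n \<Rightarrow> real" where
  "mnorm A = onorm (\<lambda>x. A *v x)"

end

theory Submission
  imports Defs
begin

text \<open>
  For \<open>V t = x\<^sub>t \<bullet> H x\<^sub>t\<close> the Lyapunov equation expands \<open>V (t + 1)\<close> into
  \<open>V t - x\<^sub>t \<bullet> C x\<^sub>t + 2 x\<^sub>t \<bullet> A\<^sup>T H B y + y \<bullet> B\<^sup>T H B y\<close>, where \<open>y\<close> is the delayed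
  state. Bounding the cross term by \<open>|A\<^sup>T H B| (|x\<^sub>t|\<^sup>2 + |y|\<^sup>2)\<close> and comparing every
  quadratic form with \<open>H\<close> through its extreme eigenvalues gives the discrete Halanay
  inequality \<open>V (t + 1) \<le> \<alpha> V t + \<beta> V (t - \<tau>\<^sub>t)\<close>. As all delays are at most
  \<open>N = max \<T>\<close>, induction yields \<open>V t \<le> K \<rho>^t\<close> for any \<open>\<rho> < 1\<close> with
  \<open>\<alpha> + \<beta> \<le> \<rho>^(N + 1)\<close>, and \<open>\<surd>\<rho>\<close> is then a decay rate for \<open>|x\<^sub>t|\<close>.
\<close>

subsection \<open>Quadratic forms of symmetric matrices\<close>

lemma matrix_vector_inner_transpose:
  "(P *v y) \<bullet> w = y \<bullet> (transpose P *v (w::real^'n))"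
  by (metis dot_lmul_matrix inner_commute transpose_matrix_vector)

lemma symmetric_inner_matrix_commute:
  assumes "transpose M = M"
  shows "x \<bullet> (M *v y) = y \<bullet> (M *v (x::real^'n))"
  by (metis assms inner_commute matrix_vector_inner_transpose)

lemma psd_quadratic_form_eq_0_imp_eq_0:
  fixes R :: "real^'n^'n"
  assumes sym: "transpose R = R" and psd: "\<And>w. 0 \<le> w \<bullet> (R *v w)"
    and zero: "u \<bullet> (R *v u) = 0"
  shows "R *v u = 0"
proof -
  define z where "z = R *v u"
  define a where "a = z \<bullet> z"
  define b where "b = z \<bullet> (R *v z)"
  have along_z: "0 \<le> 2 * s * a + s\<^sup>2 * b" for s
  proof -
    have "0 \<le> (u + s *\<^sub>R z) \<bullet> (R *v (u + s *\<^sub>R z))" by (rule psd)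
    also have "\<dots> = 2 * s * a + s\<^sup>2 * b"
      using zero symmetric_inner_matrix_commute[OF sym, of u z]
      by (simp add: a_def b_def z_def matrix_vector_right_distrib matrix_vector_mult_scaleR
          inner_add_left inner_add_right power2_eq_square algebra_simps)
    finally show ?thesis .
  qed
  have "a = 0"
  proof (rule ccontr)
    assume "a \<noteq> 0"
    then have a_pos: "a > 0" unfolding a_def by (simp add: order_less_le)
    define d where "d = \<bar>b\<bar> + 1"
    have d: "d > 0" "b < 2 * d" unfolding d_def by auto
    \<comment> \<open>for small negative \<open>s\<close> the linear term \<open>2 s a\<close> dominates; \<open>s = -a/d\<close> is small enough\<close>
    have "2 * (- a / d) * a + (- a / d)\<^sup>2 * b = a\<^sup>2 * (b - 2 * d) / d\<^sup>2"
      using d by (simp add: field_simps power2_eq_square)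
    also have "\<dots> < 0" using a_pos d by (intro divide_neg_pos mult_pos_neg) auto
    finally show False using along_z[of "- a / d"] by simp
  qed
  then show ?thesis by (simp add: a_def z_def)
qed

lemma symmetric_rayleigh_min_eigenvalue:
  fixes M :: "real^'n^'n"
  assumes sym: "transpose M = M"
  shows "\<exists>\<mu>\<in>real_eigenvalues M. \<forall>x. \<mu> * (x \<bullet> x) \<le> x \<bullet> (M *v x)"
proof -
  let ?S = "sphere (0::real^'n) 1"
  have "?S \<noteq> {}" by (metis empty_iff mem_sphere_0 norm_axis_1)
  moreover have "continuous_on ?S (\<lambda>x. x \<bullet> (M *v x))"
    by (intro continuous_intros linear_continuous_on matrix_vector_mul_bounded_linear)
  ultimately obtain u where u: "u \<in> ?S"
    and u_min: "\<And>y. y \<in> ?S \<Longrightarrow> u \<bullet> (M *v u) \<le> y \<bullet> (M *v y)"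
    using continuous_attains_inf[OF compact_sphere] by blast
  define \<mu> where "\<mu> = u \<bullet> (M *v u)"
  have rayleigh: "\<mu> * (x \<bullet> x) \<le> x \<bullet> (M *v x)" for x
  proof (cases "x = 0")
    case False
    let ?y = "(1 / norm x) *\<^sub>R x"
    have "?y \<in> ?S" using False by simp
    then have "\<mu> \<le> ?y \<bullet> (M *v ?y)" using u_min unfolding \<mu>_def by blast
    also have "\<dots> = (x \<bullet> (M *v x)) / (norm x)\<^sup>2"
      by (simp add: matrix_vector_mult_scaleR power2_eq_square)
    finally show ?thesis using False by (simp add: field_simps power2_norm_eq_inner)
  qed simp
  define R where "R = M - mat \<mu>"
  have R_apply: "R *v w = M *v w - \<mu> *\<^sub>R w" for w
    by (simp add: R_def matrix_vector_mult_diff_rdistrib matrix_scaleR[symmetric])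
  have "R *v u = 0"
  proof (rule psd_quadratic_form_eq_0_imp_eq_0)
    show "transpose R = R" using sym by (simp add: R_def transpose_def mat_def vec_eq_iff)
    show "0 \<le> w \<bullet> (R *v w)" for w using rayleigh[of w] by (simp add: R_apply inner_diff_right)
    show "u \<bullet> (R *v u) = 0"
      using u by (simp add: R_apply inner_diff_right \<mu>_def dot_square_norm)
  qed
  then have "M *v u = \<mu> *s u" by (simp add: R_apply scalar_mult_eq_scaleR)
  moreover have "u \<noteq> 0" using u by auto
  ultimately show ?thesis using rayleigh unfolding real_eigenvalues_def by blast
qed

lemma symmetric_real_eigenvalues_finite:
  fixes M :: "real^'n^'n"
  assumes sym: "transpose M = M"
  shows "finite (real_eigenvalues M)"
proof -
  let ?S = "real_eigenvalues M"
  define v where "v \<mu> = (SOME v. v \<noteq> 0 \<and> M *v v = \<mu> *s v)" for \<mu>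
  have v: "v \<mu> \<noteq> 0 \<and> M *v v \<mu> = \<mu> *s v \<mu>" if "\<mu> \<in> ?S" for \<mu>
  proof -
    have "\<exists>v. v \<noteq> 0 \<and> M *v v = \<mu> *s v" using that unfolding real_eigenvalues_def by blast
    then show ?thesis unfolding v_def by (rule someI_ex)
  qed
  have inj: "inj_on v ?S"
  proof (rule inj_onI)
    fix \<mu> \<nu> assume \<mu>: "\<mu> \<in> ?S" and \<nu>: "\<nu> \<in> ?S" and "v \<mu> = v \<nu>"
    then have "\<mu> *s v \<mu> = \<nu> *s v \<mu>" using v[OF \<mu>] v[OF \<nu>] by metis
    then have "(\<mu> - \<nu>) *\<^sub>R v \<mu> = 0" by (simp add: scalar_mult_eq_scaleR scaleR_left_diff_distrib)
    then show "\<mu> = \<nu>" using v[OF \<mu>] by simp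
  qed
  have "pairwise orthogonal (v ` ?S)"
  proof (clarsimp simp: pairwise_def)
    fix \<mu> \<nu> assume \<mu>: "\<mu> \<in> ?S" and \<nu>: "\<nu> \<in> ?S" and "v \<mu> \<noteq> v \<nu>"
    then have "\<mu> \<noteq> \<nu>" by blast
    have "\<mu> * (v \<nu> \<bullet> v \<mu>) = v \<nu> \<bullet> (M *v v \<mu>)" using v[OF \<mu>] by (simp add: scalar_mult_eq_scaleR)
    also have "\<dots> = v \<mu> \<bullet> (M *v v \<nu>)" by (rule symmetric_inner_matrix_commute[OF sym])
    also have "\<dots> = \<nu> * (v \<nu> \<bullet> v \<mu>)"
      using v[OF \<nu>] by (simp add: scalar_mult_eq_scaleR inner_commute[of "v \<mu>"])
    finally show "orthogonal (v \<mu>) (v \<nu>)"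
      using \<open>\<mu> \<noteq> \<nu>\<close> by (simp add: orthogonal_def inner_commute)
  qed
  moreover have "0 \<notin> v ` ?S" using v by auto
  ultimately have "finite (v ` ?S)"
    using pairwise_orthogonal_independent independent_bound by blast
  then show ?thesis using inj finite_imageD by blast
qed

lemma matrix_vector_mult_uminus: "(- M) *v v = - (M *v v :: 'a::ring_1^'m)"
  by (simp add: matrix_vector_mult_def vec_eq_iff sum_negf)

lemma real_eigenvalues_uminus:
  fixes M :: "real^'n^'n"
  shows "real_eigenvalues (- M) = uminus ` real_eigenvalues M"
proof -
  have "(- M) *v v = \<mu> *s v \<longleftrightarrow> M *v v = (- \<mu>) *s v" for v \<mu>
    by (metis matrix_vector_mult_uminus minus_minus scalar_mult_eq_scaleR scaleR_minus_left)
  then show ?thesis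
    unfolding real_eigenvalues_def by (force intro: image_eqI[where x = "- _"])
qed

lemma
  fixes M :: "real^'n^'n"
  assumes sym: "transpose M = M"
  shows min_eig_in_real_eigenvalues: "min_eig M \<in> real_eigenvalues M"
    and min_eig_le_quadratic_form: "min_eig M * (x \<bullet> x) \<le> x \<bullet> (M *v x)"
    and quadratic_form_le_max_eig: "x \<bullet> (M *v x) \<le> max_eig M * (x \<bullet> x)"
proof -
  have fin: "finite (real_eigenvalues M)" by (rule symmetric_real_eigenvalues_finite[OF sym])
  obtain \<mu> where \<mu>: "\<mu> \<in> real_eigenvalues M" and rayleigh: "\<And>x. \<mu> * (x \<bullet> x) \<le> x \<bullet> (M *v x)"
    using symmetric_rayleigh_min_eigenvalue[OF sym] by blast
  show "min_eig M \<in> real_eigenvalues M" unfolding min_eig_def using fin \<mu> Min_in by blast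
  have "min_eig M \<le> \<mu>" unfolding min_eig_def using fin \<mu> by simp
  then show "min_eig M * (x \<bullet> x) \<le> x \<bullet> (M *v x)"
    by (meson rayleigh inner_ge_zero mult_right_mono order_trans)
  have "transpose (- M) = - M" using sym by (simp add: transpose_def vec_eq_iff)
  then obtain \<nu> where \<nu>: "\<nu> \<in> real_eigenvalues (- M)"
    and rayleigh': "\<And>x. \<nu> * (x \<bullet> x) \<le> x \<bullet> ((- M) *v x)"
    using symmetric_rayleigh_min_eigenvalue by blast
  have "- \<nu> \<le> max_eig M"
    using \<nu> fin unfolding max_eig_def real_eigenvalues_uminus by auto
  moreover have "x \<bullet> (M *v x) \<le> - \<nu> * (x \<bullet> x)"
    using rayleigh'[of x] by (simp add: matrix_vector_mult_uminus)
  ultimately show "x \<bullet> (M *v x) \<le> max_eig M * (x \<bullet> x)"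
    by (meson inner_ge_zero mult_right_mono order_trans)
qed

lemma min_eig_pos:
  fixes M :: "real^'n^'n"
  assumes "transpose M = M" and "pos_def M"
  shows "min_eig M > 0"
proof -
  obtain v where v: "v \<noteq> 0" "M *v v = min_eig M *s v"
    using min_eig_in_real_eigenvalues[OF assms(1)] unfolding real_eigenvalues_def by blast
  have "0 < v \<bullet> (M *v v)" using assms(2) v unfolding pos_def_def by blast
  moreover have "0 < v \<bullet> v" using v by simp
  ultimately show ?thesis using v by (simp add: scalar_mult_eq_scaleR zero_less_mult_iff)
qed

lemma min_eig_le_max_eig:
  fixes M :: "real^'n^'n"
  assumes "transpose M = M"
  shows "min_eig M \<le> max_eig M"
proof -
  let ?e = "axis undefined 1 :: real^'n"
  have "min_eig M * (?e \<bullet> ?e) \<le> max_eig M * (?e \<bullet> ?e)"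
    using min_eig_le_quadratic_form[OF assms] quadratic_form_le_max_eig[OF assms] by (rule order_trans)
  then show ?thesis by (simp add: inner_axis_axis)
qed

lemma mnorm_nonneg: "0 \<le> mnorm N"
  unfolding mnorm_def by (simp add: onorm_pos_le)

lemma abs_inner_mnorm_le: "\<bar>a \<bullet> (N *v b)\<bar> \<le> mnorm N * norm a * norm b"
proof -
  have "\<bar>a \<bullet> (N *v b)\<bar> \<le> norm a * norm (N *v b)" by (rule Cauchy_Schwarz_ineq2)
  also have "\<dots> \<le> norm a * (mnorm N * norm b)"
    unfolding mnorm_def by (intro mult_left_mono onorm) auto
  finally show ?thesis by (simp add: ac_simps)
qed

subsection \<open>A discrete Halanay inequality\<close>

lemma delayed_inequality_geometric_decay:
  fixes V :: "nat \<Rightarrow> real"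
  assumes V_nonneg: "\<And>t. 0 \<le> V t" and "0 \<le> \<alpha>" and "0 \<le> \<beta>" and "\<alpha> + \<beta> < 1"
    and delay_le: "\<And>t. \<tau> t \<le> N"
    and step: "\<And>t. N \<le> t \<Longrightarrow> V (Suc t) \<le> \<alpha> * V t + \<beta> * V (t - \<tau> t)"
  shows "\<exists>\<rho>. 0 < \<rho> \<and> \<rho> < 1 \<and> (\<forall>t. V t \<le> Max (V ` {0..N}) / \<rho> ^ N * \<rho> ^ t)"
proof -
  define r where "r = max (\<alpha> + \<beta>) (1/2)"
  have r: "0 < r" "r < 1" "\<alpha> + \<beta> \<le> r" unfolding r_def using assms(4) by auto
  define \<rho> where "\<rho> = root (N + 1) r"
  have \<rho>: "0 < \<rho>" "\<rho> < 1" unfolding \<rho>_def using r by (auto intro: real_root_gt_zero)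
  have \<rho>_pow: "\<rho> ^ (N + 1) = r" unfolding \<rho>_def using r by (intro real_root_pow_pos2) auto
  define K where "K = Max (V ` {0..N}) / \<rho> ^ N"
  have initial: "V s \<le> K * \<rho> ^ N" if "s \<le> N" for s
    unfolding K_def using \<rho> that by (simp add: Max_ge)
  have "0 \<le> K"
    unfolding K_def using \<rho> by (intro divide_nonneg_pos order_trans[OF V_nonneg Max_ge]) auto
  have "V t \<le> K * \<rho> ^ t" for t
  proof (induction t rule: less_induct)
    case (less t)
    show ?case
    proof (cases "t \<le> N")
      case True
      then show ?thesis
        using initial[OF True] \<open>0 \<le> K\<close> \<rho> by (meson mult_left_mono power_decreasing less_imp_le order_trans)
    next
      case False
      then obtain s where t: "t = Suc s" and "N \<le> s" by (cases t) auto
      \<comment> \<open>both predecessors lie at most \<open>N\<close> steps back, so each is below \<open>K \<rho>^(s - N)\<close>\<close>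
      have recent: "V u \<le> K * \<rho> ^ (s - N)" if "s - N \<le> u" "u \<le> s" for u
      proof -
        have "V u \<le> K * \<rho> ^ u" using less that t by simp
        also have "\<dots> \<le> K * \<rho> ^ (s - N)"
          using \<open>0 \<le> K\<close> \<rho> that by (intro mult_left_mono power_decreasing) auto
        finally show ?thesis .
      qed
      have "V t \<le> \<alpha> * V s + \<beta> * V (s - \<tau> s)" using step[OF \<open>N \<le> s\<close>] t by simp
      also have "\<dots> \<le> (\<alpha> + \<beta>) * (K * \<rho> ^ (s - N))"
        using recent[of s] recent[of "s - \<tau> s"] delay_le[of s] assms(2,3)
        by (simp add: distrib_right mult_left_mono add_mono diff_le_mono2)
      also have "\<dots> \<le> \<rho> ^ (N + 1) * (K * \<rho> ^ (s - N))"
        using r \<rho>_pow \<open>0 \<le> K\<close> \<rho> by (intro mult_right_mono) auto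
      also have "\<dots> = K * \<rho> ^ t"
        using \<open>N \<le> s\<close> t by (simp add: power_add[symmetric])
      finally show ?thesis .
    qed
  qed
  then show ?thesis using \<rho> unfolding K_def by blast
qed

lemma quadratic_geometric_decay_imp_norm_decay:
  fixes x :: "nat \<Rightarrow> 'a::real_normed_vector" and V :: "nat \<Rightarrow> real"
  assumes "0 < \<eta>\<^sub>l" "0 < \<eta>\<^sub>h" and lower: "\<And>t. \<eta>\<^sub>l * (norm (x t))\<^sup>2 \<le> V t"
    and upper: "\<And>t. V t \<le> \<eta>\<^sub>h * (norm (x t))\<^sup>2"
    and "0 < \<rho>" "\<rho> < 1" and decay: "\<And>t. V t \<le> Max (V ` {0..N}) / \<rho> ^ N * \<rho> ^ t"
  shows "\<exists>M>0. \<exists>lam. 0 < lam \<and> lam < 1 \<and>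
           (\<forall>t. norm (x t) \<le> M * lam ^ t * Max ((\<lambda>s. norm (x s)) ` {0..N}))"
proof -
  define m where "m = Max ((\<lambda>s. norm (x s)) ` {0..N})"
  have le_m: "norm (x s) \<le> m" if "s \<le> N" for s unfolding m_def using that by (intro Max_ge) auto
  have "0 \<le> m" using le_m[of 0] norm_ge_zero order_trans by blast
  have V_max: "Max (V ` {0..N}) \<le> \<eta>\<^sub>h * m\<^sup>2"
  proof -
    have "Max (V ` {0..N}) \<in> V ` {0..N}" by (intro Max_in) auto
    then obtain s where "s \<le> N" "Max (V ` {0..N}) = V s"
      by (metis atLeastAtMost_iff imageE)
    moreover have "(norm (x s))\<^sup>2 \<le> m\<^sup>2" using le_m[OF \<open>s \<le> N\<close>] by (simp add: power_mono)
    ultimately show ?thesis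
      using upper[of s] \<open>0 < \<eta>\<^sub>h\<close> by (metis mult_left_mono order_trans less_imp_le)
  qed
  define M where "M = sqrt (\<eta>\<^sub>h / (\<eta>\<^sub>l * \<rho> ^ N))"
  have "0 < M" unfolding M_def using \<open>0 < \<eta>\<^sub>h\<close> \<open>0 < \<eta>\<^sub>l\<close> \<open>0 < \<rho>\<close> by simp
  have "norm (x t) \<le> M * sqrt \<rho> ^ t * m" for t
  proof (rule power2_le_imp_le)
    have "\<eta>\<^sub>l * (norm (x t))\<^sup>2 \<le> Max (V ` {0..N}) / \<rho> ^ N * \<rho> ^ t"
      using lower decay by (rule order_trans)
    also have "\<dots> \<le> \<eta>\<^sub>h * m\<^sup>2 / \<rho> ^ N * \<rho> ^ t"
      using V_max \<open>0 < \<rho>\<close> by (intro mult_right_mono divide_right_mono) auto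
    finally have "(norm (x t))\<^sup>2 \<le> \<eta>\<^sub>h / (\<eta>\<^sub>l * \<rho> ^ N) * \<rho> ^ t * m\<^sup>2"
      using \<open>0 < \<eta>\<^sub>l\<close> \<open>0 < \<rho>\<close> by (simp add: field_simps)
    also have "\<dots> = M\<^sup>2 * (sqrt \<rho> ^ t)\<^sup>2 * m\<^sup>2"
      unfolding M_def using \<open>0 < \<eta>\<^sub>h\<close> \<open>0 < \<eta>\<^sub>l\<close> \<open>0 < \<rho>\<close>
      by (metis less_imp_le power_mult_distrib real_sqrt_mult_self power2_eq_square
          real_sqrt_pow2 divide_nonneg_pos mult_pos_pos zero_less_power)
    also have "\<dots> = (M * sqrt \<rho> ^ t * m)\<^sup>2" by (simp add: power_mult_distrib)
    finally show "(norm (x t))\<^sup>2 \<le> (M * sqrt \<rho> ^ t * m)\<^sup>2" .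
    show "0 \<le> M * sqrt \<rho> ^ t * m" using \<open>0 < M\<close> \<open>0 \<le> m\<close> \<open>0 < \<rho>\<close> by simp
  qed
  moreover have "0 < sqrt \<rho>" "sqrt \<rho> < 1" using \<open>0 < \<rho>\<close> \<open>\<rho> < 1\<close> by auto
  ultimately show ?thesis using \<open>0 < M\<close> unfolding m_def by blast
qed

subsection \<open>The Lyapunov estimate for the delayed recursion\<close>

definition lyapunov_alpha :: "real^'n^'n \<Rightarrow> real^'n^'n \<Rightarrow> real^'n^'n \<Rightarrow> real^'n^'n \<Rightarrow> real" where
  "lyapunov_alpha A B C H =
     (if min_eig C > mnorm (transpose A ** H ** B)
      then \<bar>max_eig H - min_eig C + mnorm (transpose A ** H ** B)\<bar> / max_eig H
      else \<bar>min_eig H - min_eig C + mnorm (transpose A ** H ** B)\<bar> / min_eig H)"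

definition lyapunov_beta :: "real^'n^'n \<Rightarrow> real^'n^'n \<Rightarrow> real^'n^'n \<Rightarrow> real" where
  "lyapunov_beta A B H =
     (mnorm (transpose A ** H ** B) + mnorm (transpose B ** H ** B)) / min_eig H"

lemma dissipation_le_rate_mult:
  fixes \<eta>\<^sub>l \<eta>\<^sub>h c n p v :: real
  assumes "0 < \<eta>\<^sub>l" "\<eta>\<^sub>l \<le> \<eta>\<^sub>h" "0 \<le> p" "\<eta>\<^sub>l * p \<le> v" "v \<le> \<eta>\<^sub>h * p"
  shows "v - (c - n) * p \<le>
           (if n < c then \<bar>\<eta>\<^sub>h - c + n\<bar> / \<eta>\<^sub>h else \<bar>\<eta>\<^sub>l - c + n\<bar> / \<eta>\<^sub>l) * v"
proof -
  have "0 \<le> v" using assms(1,3,4) by (meson mult_nonneg_nonneg less_imp_le order_trans)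
  have "0 < \<eta>\<^sub>h" using assms(1,2) by simp
  show ?thesis
  proof (cases "n < c")
    case True
    \<comment> \<open>a positive dissipation \<open>c - n\<close> is weakest when \<open>p\<close> is smallest, i.e. \<open>p = v / \<eta>\<^sub>h\<close>\<close>
    have "(c - n) * (v / \<eta>\<^sub>h) \<le> (c - n) * p"
      using True assms(5) \<open>0 < \<eta>\<^sub>h\<close> by (intro mult_left_mono) (auto simp: field_simps)
    then have "v - (c - n) * p \<le> (\<eta>\<^sub>h - c + n) / \<eta>\<^sub>h * v"
      using \<open>0 < \<eta>\<^sub>h\<close> by (simp add: field_simps)
    also have "\<dots> \<le> \<bar>\<eta>\<^sub>h - c + n\<bar> / \<eta>\<^sub>h * v"
      using \<open>0 < \<eta>\<^sub>h\<close> \<open>0 \<le> v\<close> by (intro mult_right_mono divide_right_mono) auto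
    finally show ?thesis using True by simp
  next
    case False
    have "(n - c) * p \<le> (n - c) * (v / \<eta>\<^sub>l)"
      using False assms(1,4) by (intro mult_left_mono) (auto simp: field_simps)
    then have "v - (c - n) * p \<le> (\<eta>\<^sub>l - c + n) / \<eta>\<^sub>l * v"
      using assms(1) by (simp add: field_simps)
    also have "\<dots> \<le> \<bar>\<eta>\<^sub>l - c + n\<bar> / \<eta>\<^sub>l * v"
      using assms(1) \<open>0 \<le> v\<close> by (intro mult_right_mono divide_right_mono) auto
    finally show ?thesis using False by simp
  qed
qed

lemma lyapunov_quadratic_form_expansion:
  fixes A B C H :: "real^'n^'n"
  assumes symH: "transpose H = H" and lyap: "transpose A ** H ** A - H = - C"
  shows "(A *v a + B *v b) \<bullet> (H *v (A *v a + B *v b)) =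
           a \<bullet> (H *v a) - a \<bullet> (C *v a) + 2 * (a \<bullet> ((transpose A ** H ** B) *v b))
           + b \<bullet> ((transpose B ** H ** B) *v b)"
proof -
  have "transpose A ** (H ** A) = H - C" using lyap by (simp add: matrix_mul_assoc diff_eq_eq)
  then have AA: "(A *v a) \<bullet> (H *v (A *v a)) = a \<bullet> (H *v a) - a \<bullet> (C *v a)"
    by (simp add: matrix_vector_inner_transpose matrix_vector_mul_assoc
        matrix_vector_mult_diff_rdistrib inner_diff_right)
  have AB: "(A *v a) \<bullet> (H *v (B *v b)) = a \<bullet> ((transpose A ** H ** B) *v b)"
    by (simp add: matrix_vector_inner_transpose matrix_vector_mul_assoc matrix_mul_assoc)
  have BA: "(B *v b) \<bullet> (H *v (A *v a)) = (A *v a) \<bullet> (H *v (B *v b))"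
    by (rule symmetric_inner_matrix_commute[OF symH])
  have BB: "(B *v b) \<bullet> (H *v (B *v b)) = b \<bullet> ((transpose B ** H ** B) *v b)"
    by (simp add: matrix_vector_inner_transpose matrix_vector_mul_assoc matrix_mul_assoc)
  show ?thesis
    by (simp only: matrix_vector_right_distrib inner_add_left inner_add_right AA AB BA BB)
qed

lemma lyapunov_delay_step:
  fixes A B C H :: "real^'n^'n"
  assumes symC: "transpose C = C" and symH: "transpose H = H" and pdH: "pos_def H"
    and lyap: "transpose A ** H ** A - H = - C"
  shows "(A *v a + B *v b) \<bullet> (H *v (A *v a + B *v b))
           \<le> lyapunov_alpha A B C H * (a \<bullet> (H *v a)) + lyapunov_beta A B H * (b \<bullet> (H *v b))"
proof -
  define n\<^sub>1 where "n\<^sub>1 = mnorm (transpose A ** H ** B)"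
  define n\<^sub>2 where "n\<^sub>2 = mnorm (transpose B ** H ** B)"
  define p where "p = a \<bullet> a"
  define q where "q = b \<bullet> b"
  have "0 < min_eig H" by (rule min_eig_pos[OF symH pdH])
  have cross: "2 * (a \<bullet> ((transpose A ** H ** B) *v b)) \<le> n\<^sub>1 * (p + q)"
  proof -
    have "2 * (norm a * norm b) \<le> p + q"
      using sum_squares_bound[of "norm a" "norm b"]
      by (simp add: p_def q_def power2_norm_eq_inner[symmetric] power2_eq_square)
    then have "n\<^sub>1 * (2 * (norm a * norm b)) \<le> n\<^sub>1 * (p + q)"
      by (simp add: n\<^sub>1_def mnorm_nonneg mult_left_mono)
    then show ?thesis
      using abs_inner_mnorm_le[of a "transpose A ** H ** B" b] unfolding n\<^sub>1_def by argo
  qed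
  have "b \<bullet> ((transpose B ** H ** B) *v b) \<le> n\<^sub>2 * q"
    using abs_inner_mnorm_le[of b "transpose B ** H ** B" b]
    by (simp add: n\<^sub>2_def q_def power2_norm_eq_inner[symmetric] power2_eq_square ac_simps)
  moreover have "min_eig C * p \<le> a \<bullet> (C *v a)" unfolding p_def by (rule min_eig_le_quadratic_form[OF symC])
  ultimately have "(A *v a + B *v b) \<bullet> (H *v (A *v a + B *v b))
      \<le> (a \<bullet> (H *v a) - (min_eig C - n\<^sub>1) * p) + (n\<^sub>1 + n\<^sub>2) * q"
    using cross unfolding lyapunov_quadratic_form_expansion[OF symH lyap] by argo
  also have "\<dots> \<le> lyapunov_alpha A B C H * (a \<bullet> (H *v a)) + lyapunov_beta A B H * (b \<bullet> (H *v b))"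
  proof (rule add_mono)
    show "a \<bullet> (H *v a) - (min_eig C - n\<^sub>1) * p \<le> lyapunov_alpha A B C H * (a \<bullet> (H *v a))"
      unfolding lyapunov_alpha_def n\<^sub>1_def[symmetric] p_def
      using inner_ge_zero \<open>0 < min_eig H\<close> min_eig_le_max_eig[OF symH]
        min_eig_le_quadratic_form[OF symH] quadratic_form_le_max_eig[OF symH]
      by (intro dissipation_le_rate_mult) auto
    have "(n\<^sub>1 + n\<^sub>2) * q = (n\<^sub>1 + n\<^sub>2) / min_eig H * (min_eig H * q)"
      using \<open>0 < min_eig H\<close> by simp
    also have "\<dots> \<le> (n\<^sub>1 + n\<^sub>2) / min_eig H * (b \<bullet> (H *v b))"
      using \<open>0 < min_eig H\<close> min_eig_le_quadratic_form[OF symH, of b]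
      by (intro mult_left_mono) (auto simp: q_def n\<^sub>1_def n\<^sub>2_def mnorm_nonneg)
    finally show "(n\<^sub>1 + n\<^sub>2) * q \<le> lyapunov_beta A B H * (b \<bullet> (H *v b))"
      by (simp add: lyapunov_beta_def n\<^sub>1_def n\<^sub>2_def)
  qed
  finally show ?thesis .
qed

theorem theorem1:
  fixes A B C H :: "real^'n^'n"
    and T :: "nat set" and tau :: "nat \<Rightarrow> nat" and x :: "nat \<Rightarrow> real^'n"
  assumes stabA: "schur_stable A"
    and symC: "transpose C = C" and pdC: "pos_def C"
    and symH: "transpose H = H" and pdH: "pos_def H"
    and lyap: "transpose A ** H ** A - H = - C"
    and T_ne: "T \<noteq> {}" and T_fin: "finite T" and T_pos: "\<forall>s\<in>T. s \<ge> 1"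
    and tau_T: "\<forall>t. tau t \<in> T"
    and rec: "\<forall>t\<ge>Max T. x (Suc t) = A *v x t + B *v x (t - tau t)"
    and ab: "(let c = min_eig C; eta_lo = min_eig H; eta_hi = max_eig H;
                  nAHB = mnorm (transpose A ** H ** B); nBHB = mnorm (transpose B ** H ** B);
                  \<alpha> = (if c > nAHB then \<bar>eta_hi - c + nAHB\<bar> / eta_hi
                       else \<bar>eta_lo - c + nAHB\<bar> / eta_lo);
                  \<beta> = (nAHB + nBHB) / eta_lo
              in \<alpha> + \<beta> < 1)"
  shows "\<exists>M>0. \<exists>lam. 0 < lam \<and> lam < 1 \<and>
           (\<forall>t. norm (x t) \<le> M * lam ^ t * Max ((\<lambda>s. norm (x s)) ` {0..Max T}))"
proof -
  define V where "V t = x t \<bullet> (H *v x t)" for t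
  let ?\<alpha> = "lyapunov_alpha A B C H" and ?\<beta> = "lyapunov_beta A B H"
  have "0 < min_eig H" by (rule min_eig_pos[OF symH pdH])
  have V_nonneg: "0 \<le> V t" for t
    using min_eig_le_quadratic_form[OF symH, of "x t"] \<open>0 < min_eig H\<close> unfolding V_def
    by (meson inner_ge_zero less_imp_le mult_nonneg_nonneg order_trans)
  have rates: "0 \<le> ?\<alpha>" "0 \<le> ?\<beta>" "?\<alpha> + ?\<beta> < 1"
    using \<open>0 < min_eig H\<close> min_eig_le_max_eig[OF symH] ab
    by (auto simp: Let_def lyapunov_alpha_def lyapunov_beta_def mnorm_nonneg)
  have delay_le: "tau t \<le> Max T" for t using tau_T T_fin by simp
  have step: "V (Suc t) \<le> ?\<alpha> * V t + ?\<beta> * V (t - tau t)" if "Max T \<le> t" for t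
    using rec that lyapunov_delay_step[OF symC symH pdH lyap] by (simp add: V_def)
  obtain \<rho> where "0 < \<rho>" "\<rho> < 1" "\<And>t. V t \<le> Max (V ` {0..Max T}) / \<rho> ^ Max T * \<rho> ^ t"
    using delayed_inequality_geometric_decay[OF V_nonneg rates delay_le step] by blast
  then show ?thesis
    using quadratic_geometric_decay_imp_norm_decay[of "min_eig H" "max_eig H" x V]
      \<open>0 < min_eig H\<close> min_eig_le_max_eig[OF symH]
      min_eig_le_quadratic_form[OF symH] quadratic_form_le_max_eig[OF symH]
    by (simp add: V_def power2_norm_eq_inner)
qed

end
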